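(* Let $\varepsilon$ be an integer with $\varepsilon\equiv 0\pmod{4}$. Then there exist infinitely many positive odd integers $n$ with the property that there exist positive integers $d_1, d_2$, each dividing $\frac{n^2+1}{2}$, such that $d_1+d_2=2n+\varepsilon$. *)

theory Defs
  imports Main
begin

end

theory Submission
  imports Defs
begin

text \<open>Write \<open>\<epsilon> = 4k\<close> and \<open>c = 2k\<^sup>2 - 2k + 1\<close>. If positive integers \<open>x, y\<close> satisfy
  \<open>8xyc = (x + y - 4k)\<^sup>2 + 4\<close>, then \<open>x + y - 4k = 2n\<close> with \<open>n\<close> odd and \<open>(n\<^sup>2 + 1)/2 = xyc\<close>,
  so \<open>x\<close> and \<open>y\<close> are divisors of \<open>(n\<^sup>2 + 1)/2\<close> with sum \<open>2n + \<epsilon>\<close>. Viewed as a quadratic in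
  \<open>x\<close>, the equation has the second root \<open>(16k\<^sup>2 - 16k + 6)y + 8k - x\<close> (Vieta jumping), so from
  the solution \<open>(1, 16k\<^sup>2 - 8k + 5)\<close> one obtains solutions with unboundedly large \<open>n\<close>.\<close>

definition vieta_solution :: "int \<Rightarrow> int \<Rightarrow> int \<Rightarrow> bool" where
  "vieta_solution k x y \<longleftrightarrow> 8*x*y*(2*k^2 - 2*k + 1) = (x + y - 4*k)^2 + 4"

definition vieta_jump :: "int \<Rightarrow> int \<Rightarrow> int \<Rightarrow> int" where
  "vieta_jump k x y = (16*k^2 - 16*k + 6)*y - x + 8*k"

lemma vieta_solution_base: "vieta_solution k 1 (16*k^2 - 8*k + 5)"
  unfolding vieta_solution_def by algebra

lemma vieta_solution_jump:
  assumes "vieta_solution k x y"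
  shows "vieta_solution k y (vieta_jump k x y)"
proof -
  have "(y + vieta_jump k x y - 4*k)^2 + 4 - 8*y*vieta_jump k x y*(2*k^2 - 2*k + 1)
      = (x + y - 4*k)^2 + 4 - 8*x*y*(2*k^2 - 2*k + 1)"
    unfolding vieta_jump_def by algebra
  with assms show ?thesis
    unfolding vieta_solution_def by linarith
qed

lemma vieta_solution_half_sum:
  assumes "vieta_solution k x y"
  obtains n where "x + y - 4*k = 2*n" "odd n" "(n^2 + 1) div 2 = x*y*(2*k^2 - 2*k + 1)"
proof -
  define m where "m = x*y*(2*k^2 - 2*k + 1)"
  have eq: "(x + y - 4*k)^2 + 4 = 8*m"
    using assms unfolding vieta_solution_def m_def by (simp add: algebra_simps)
  then have "even ((x + y - 4*k)^2 + 4)"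
    by simp
  then have "even (x + y - 4*k)"
    by simp
  then obtain n where n: "x + y - 4*k = 2*n"
    by (rule evenE)
  have "4*(n^2 + 1) = 4*(2*m)"
    using eq unfolding n by (simp add: power_mult_distrib algebra_simps)
  then have m: "n^2 + 1 = 2*m"
    by simp
  then have "even (n^2 + 1)"
    by simp
  then have "odd n"
    by simp
  with n m show ?thesis
    using that unfolding m_def by simp
qed

lemma jump_coefficient_ge_6: "(6::int) \<le> 16*k^2 - 16*k + 6"
proof -
  have "0 \<le> k*(k - 1)"
    by (cases "k \<le> 0") (simp_all add: mult_nonpos_nonpos)
  then show ?thesis
    by (simp add: power2_eq_square algebra_simps)
qed

lemma initial_root_bound: "4*\<bar>k\<bar> < 16*k^2 - 8*k + (5::int)"
proof (cases "k \<le> 0")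
  case True
  then show ?thesis
    using zero_le_power2[of k] by linarith
next
  case False
  then have "k \<le> k*k"
    by (simp add: mult_le_cancel_left1)
  with False show ?thesis
    unfolding power2_eq_square by linarith
qed

definition increasing_solution :: "int \<Rightarrow> int \<Rightarrow> int \<Rightarrow> bool" where
  "increasing_solution k x y \<longleftrightarrow> vieta_solution k x y \<and> 1 \<le> x \<and> x < y \<and> 4*\<bar>k\<bar> < y"

lemma increasing_solution_base: "increasing_solution k 1 (16*k^2 - 8*k + 5)"
proof -
  have "16*k^2 - 8*k + 5 = (4*k - 1)^2 + (4::int)"
    by algebra
  then have "1 < 16*k^2 - 8*k + (5::int)"
    using zero_le_power2[of "4*k - 1"] by linarith
  then show ?thesis
    using vieta_solution_base initial_root_bound
    unfolding increasing_solution_def by simp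
qed

text \<open>The new root exceeds \<open>3y\<close>: the coefficient is at least 6, \<open>x < y\<close> and \<open>8k > -2y\<close>.\<close>

lemma increasing_solution_jump:
  assumes "increasing_solution k x y"
  shows "increasing_solution k y (vieta_jump k x y)"
proof -
  have "6*y \<le> (16*k^2 - 16*k + 6)*y"
    using assms jump_coefficient_ge_6 unfolding increasing_solution_def
    by (intro mult_right_mono) auto
  then have "3*y < vieta_jump k x y"
    using assms unfolding increasing_solution_def vieta_jump_def by linarith
  then show ?thesis
    using assms vieta_solution_jump unfolding increasing_solution_def by auto
qed

lemma increasing_solution_divisors:
  assumes sol: "increasing_solution k x y" and n: "n = (x + y - 4*k) div 2"
  shows "0 < n" "odd n" "0 < x" "0 < y" "x + y = 2*n + 4*k"
    "x dvd (n^2 + 1) div 2" "y dvd (n^2 + 1) div 2"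
proof -
  obtain m where m: "x + y - 4*k = 2*m" "odd m" "(m^2 + 1) div 2 = x*y*(2*k^2 - 2*k + 1)"
    using sol vieta_solution_half_sum unfolding increasing_solution_def by blast
  have "m = n"
    using m(1) n by simp
  with m sol show "0 < n" "odd n" "0 < x" "0 < y" "x + y = 2*n + 4*k"
    unfolding increasing_solution_def by auto
  show "x dvd (n^2 + 1) div 2" "y dvd (n^2 + 1) div 2"
    using m(3) unfolding \<open>m = n\<close> by simp_all
qed

lemma increasing_solution_jump_half_sum_less:
  assumes "increasing_solution k x y"
  shows "(x + y - 4*k) div 2 < (y + vieta_jump k x y - 4*k) div 2"
proof -
  have "x + 2 \<le> vieta_jump k x y"
    using assms increasing_solution_jump[OF assms] unfolding increasing_solution_def by linarith
  then show ?thesis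
    by presburger
qed

theorem theorem1:
  fixes \<epsilon> :: int
  assumes "\<epsilon> mod 4 = 0"
  shows "infinite {n :: int. n > 0 \<and> odd n \<and>
           (\<exists>d1 d2 :: int. d1 > 0 \<and> d2 > 0 \<and>
              d1 dvd ((n^2 + 1) div 2) \<and> d2 dvd ((n^2 + 1) div 2) \<and>
              d1 + d2 = 2 * n + \<epsilon>)}"
    (is "infinite ?S")
proof -
  define k where "k = \<epsilon> div 4"
  have \<epsilon>: "\<epsilon> = 4*k"
    using assms unfolding k_def by auto
  define T where "T = {(x + y - 4*k) div 2 | x y. increasing_solution k x y}"
  have "T \<subseteq> ?S"
  proof
    fix n assume "n \<in> T"
    then obtain x y where "increasing_solution k x y" and "n = (x + y - 4*k) div 2"
      unfolding T_def by blast
    from increasing_solution_divisors[OF this] show "n \<in> ?S"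
      unfolding \<epsilon> by blast
  qed
  moreover have "infinite T"
  proof (rule infinite_growing)
    show "T \<noteq> {}"
      using increasing_solution_base unfolding T_def by blast
  next
    fix n assume "n \<in> T"
    then obtain x y where "increasing_solution k x y" and "n = (x + y - 4*k) div 2"
      unfolding T_def by blast
    then show "\<exists>m\<in>T. n < m"
      using increasing_solution_jump increasing_solution_jump_half_sum_less
      unfolding T_def by blast
  qed
  ultimately show ?thesis
    using infinite_super by blast
qed

end
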